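(* Let $L\ge 2$. (i) Every triangulation of $[0,1]^L$ induced by a generic fitness landscape whose fitness graph is a Haldane graph has $2^{L-1}$ isolated genotypes. (ii) For $L\ge 3$, no generic fitness landscape whose fitness graph is a Haldane graph induces a staircase triangulation. (iii) For every $L$, there exists a generic fitness landscape whose fitness graph is a Haldane graph and which induces a corner-cut triangulation.
   Context: Genotypes $g\in\{0,1\}^L$ are vertices of $[0,1]^L$. The triangulation induced by $w:\{0,1\}^L\to\mathbb{R}_{\ge 0}$ is the regular subdivision of $[0,1]^L$ obtained by projecting the upper faces of $\mathrm{conv}\{(g,w_g)\}$; $w$ is generic if all $w_g$ are distinct and this subdivision is a triangulation. The fitness graph directs each cube edge toward the genotype of higher fitness; a peak is a genotype with all neighbours of lower fitness. A Haldane graph is a fitness graph with the maximal possible number $2^{L-1}$ of peaks. A genotype $g$ is isolated (in a triangulation) if there is no genotype $g'$ at Hamming distance $2$ from $g$ such that $g,g'$ belong to a common simplex. A corner simplex consists of a vertex and its $L$ Hamming neighbours; a corner-cut triangulation is one having $2^{L-1}$ corner simplices. The standard staircase triangulation consists of the $L!$ simplices formed by the genotypes along a walk from $0\cdots0$ to $1\cdots1$ in which each step changes one $0$ to a $1$; a staircase triangulation is its image under any cube symmetry (coordinate permutations and bit flips). *)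

theory Defs
  imports "HOL-Analysis.Analysis"
begin

text \<open>Genotypes of length L = CARD('n) are subsets g of the (finite) locus type 'n;
  locus i carries a 1 iff i \<in> g.  The corresponding vertex of the cube [0,1]^L:\<close>

definition vert :: "'n::finite set \<Rightarrow> real^'n" where
  "vert g = (\<chi> i. if i \<in> g then 1 else 0)"

definition hamming :: "'n::finite set \<Rightarrow> 'n set \<Rightarrow> nat" where
  "hamming g h = card ((g - h) \<union> (h - g))"

text \<open>The genotype set of an upper face of conv{(g, w g)}: the genotypes whose lifted point
  lies on a supporting hyperplane x_{L+1} = a . x + c lying weakly above all lifted points.\<close>

definition upper_face :: "('n::finite set \<Rightarrow> real) \<Rightarrow> 'n set set \<Rightarrow> bool" where
  "upper_face w S \<longleftrightarrow>
     (\<exists>(a::real^'n) (c::real). (\<forall>g. w g \<le> a \<bullet> vert g + c) \<and> S = {g. w g = a \<bullet> vert g + c})"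

text \<open>Maximal cells of the regular subdivision induced by w: projections of the
  full-dimensional upper faces (given by their genotype sets).\<close>

definition induced_cells :: "('n::finite set \<Rightarrow> real) \<Rightarrow> 'n set set set" where
  "induced_cells w = {S. upper_face w S \<and> aff_dim (vert ` S) = int CARD('n)}"

definition generic :: "('n::finite set \<Rightarrow> real) \<Rightarrow> bool" where
  "generic w \<longleftrightarrow> inj w \<and> (\<forall>S \<in> induced_cells w. \<not> affine_dependent (vert ` S))"

definition fitness_landscape :: "('n::finite set \<Rightarrow> real) \<Rightarrow> bool" where
  "fitness_landscape w \<longleftrightarrow> (\<forall>g. 0 \<le> w g)"

definition peak :: "('n::finite set \<Rightarrow> real) \<Rightarrow> 'n set \<Rightarrow> bool" where
  "peak w g \<longleftrightarrow> (\<forall>h. hamming g h = 1 \<longrightarrow> w h < w g)"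

definition haldane :: "('n::finite set \<Rightarrow> real) \<Rightarrow> bool" where
  "haldane w \<longleftrightarrow> card {g. peak w g} = 2 ^ (CARD('n) - 1)"

definition isolated :: "'n::finite set set set \<Rightarrow> 'n set \<Rightarrow> bool" where
  "isolated T g \<longleftrightarrow> \<not> (\<exists>g' S. hamming g g' = 2 \<and> S \<in> T \<and> g \<in> S \<and> g' \<in> S)"

definition corner_simplex :: "'n::finite set set \<Rightarrow> bool" where
  "corner_simplex S \<longleftrightarrow> (\<exists>v. S = insert v {h. hamming v h = 1})"

definition corner_cut :: "'n::finite set set set \<Rightarrow> bool" where
  "corner_cut T \<longleftrightarrow> card {S \<in> T. corner_simplex S} = 2 ^ (CARD('n) - 1)"

text \<open>Standard staircase triangulation: one simplex per ordering xs of the loci, consisting of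
  the genotypes along the walk flipping the loci to 1 in the order xs.\<close>

definition standard_staircase :: "'n::finite set set set" where
  "standard_staircase =
     {{set (take k xs) | k. k \<le> length xs} | xs. distinct xs \<and> set xs = (UNIV :: 'n set)}"

text \<open>Cube symmetries: bit flips on the loci F followed by a coordinate permutation p.\<close>

definition cube_sym :: "('n \<Rightarrow> 'n) \<Rightarrow> 'n set \<Rightarrow> 'n set \<Rightarrow> 'n set" where
  "cube_sym p F g = p ` ((g - F) \<union> (F - g))"

definition staircase :: "'n::finite set set set \<Rightarrow> bool" where
  "staircase T \<longleftrightarrow> (\<exists>p F. bij p \<and> T = (\<lambda>S. cube_sym p F ` S) ` standard_staircase)"

end

theory Submission
  imports Defs "HOL-Computational_Algebra.Polynomial"
begin

(* Two neighbouring genotypes cannot both be peaks, so a landscape with 2^(L-1) peaks has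
   peaks exactly on one half of a bipartition that every single flip swaps.

   A non-peak v is isolated: the affine function defining a face through v and a genotype v'
   at distance 2 has equal sums over the two diagonals of the square spanned by v and v',
   it equals w at v and v', and it dominates w at the two other corners, which are peaks and
   hence higher than v and v'.  A peak g is not isolated: interpolate w affinely at g,
   g + e_i and g + e_i + e_j, with steep slopes in all other loci; this dominates w also at
   g + e_j because g and g + e_i + e_j are peaks, and the resulting upper face lies in a cell.
   So the isolated genotypes are the 2^(L-1) non-peaks.  A staircase simplex contains a
   monotone walk v_0, v_1, v_2, v_3, and one of v_0, v_1 is a non-peak sharing the simplex
   with a genotype at distance 2.

   For the last part take w = [card g even] + t^(idx g + 1) with small t > 0: its peaks are
   the even genotypes, the corner simplex of every odd genotype is a cell, and genericity
   fails only for the finitely many t that are roots of one of finitely many nonzero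
   polynomials. *)

section \<open>Flipping loci\<close>

definition toggle :: "'a \<Rightarrow> 'a set \<Rightarrow> 'a set" where
  "toggle k g = (if k \<in> g then g - {k} else insert k g)"

lemma mem_toggle: "z \<in> toggle k g \<longleftrightarrow> (z = k \<longleftrightarrow> z \<notin> g)"
  by (auto simp: toggle_def)

lemma toggle_toggle [simp]: "toggle k (toggle k g) = g"
  by (auto simp: toggle_def)

lemma toggle_commute: "toggle i (toggle j g) = toggle j (toggle i g)"
  by (auto simp: toggle_def)

lemma inj_toggle: "inj (toggle k)"
  by (metis injI toggle_toggle)

lemma toggle_image_iff: "g \<in> toggle k ` P \<longleftrightarrow> toggle k g \<in> P"
  by (metis image_iff toggle_toggle)

lemma even_card_toggle: "even (card (toggle k g)) \<longleftrightarrow> odd (card (g :: 'a::finite set))"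
  by (cases "k \<in> g") (auto simp: toggle_def card_Suc_Diff1)

lemma toggle_eq_iff: "h = toggle k g \<longleftrightarrow> sym_diff g h = {k}"
proof
  assume "sym_diff g h = {k}"
  then have "z \<in> h \<longleftrightarrow> z \<in> toggle k g" for z
    unfolding mem_toggle by (cases "z = k") blast+
  then show "h = toggle k g" by blast
qed (auto simp: toggle_def)

lemma toggle2_eq_iff:
  assumes "i \<noteq> j"
  shows "h = toggle j (toggle i g) \<longleftrightarrow> sym_diff g h = {i, j}"
proof
  assume "sym_diff g h = {i, j}"
  then have "z \<in> h \<longleftrightarrow> z \<in> toggle j (toggle i g)" for z
    unfolding mem_toggle using assms by (cases "z = i"; cases "z = j") blast+
  then show "h = toggle j (toggle i g)" by blast
qed (use assms in \<open>auto simp: toggle_def\<close>)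

lemma hamming_eq_1_iff: "hamming g h = 1 \<longleftrightarrow> (\<exists>k. h = toggle k g)"
  by (simp add: hamming_def card_1_singleton_iff toggle_eq_iff)

lemma hamming_eq_2_iff: "hamming g h = 2 \<longleftrightarrow> (\<exists>i j. i \<noteq> j \<and> h = toggle j (toggle i g))"
  unfolding hamming_def card_2_iff by (metis toggle2_eq_iff)

lemma sym_diff_toggle [simp]: "sym_diff g (toggle k g) = {k}"
  by (rule toggle_eq_iff[THEN iffD1, OF refl])

lemma sym_diff_toggle2: "i \<noteq> j \<Longrightarrow> sym_diff g (toggle j (toggle i g)) = {i, j}"
  by (rule toggle2_eq_iff[THEN iffD1, OF _ refl])

lemma hamming_toggle: "hamming g (toggle k g) = 1"
  by (simp add: hamming_def)

lemma hamming_toggle2: "i \<noteq> j \<Longrightarrow> hamming g (toggle j (toggle i g)) = 2"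
  by (simp add: hamming_def sym_diff_toggle2)

lemma sym_diff_subset_pair:
  assumes "sym_diff g x \<subseteq> {i, j}" "i \<noteq> j"
  shows "x = g \<or> x = toggle i g \<or> x = toggle j g \<or> x = toggle j (toggle i g)"
proof -
  have "A \<subseteq> {i, j} \<Longrightarrow> A = {} \<or> A = {i} \<or> A = {j} \<or> A = {i, j}" for A
    by auto
  with assms(1)
  consider "sym_diff g x = {}" | "sym_diff g x = {i}" | "sym_diff g x = {j}" | "sym_diff g x = {i, j}"
    by blast
  then show ?thesis
  proof cases
    case 1
    then show ?thesis by blast
  next
    case 2
    then have "x = toggle i g" by (rule toggle_eq_iff[THEN iffD2])
    then show ?thesis by simp
  next
    case 3
    then have "x = toggle j g" by (rule toggle_eq_iff[THEN iffD2])
    then show ?thesis by simp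
  next
    case 4
    then have "x = toggle j (toggle i g)" by (rule toggle2_eq_iff[OF assms(2), THEN iffD2])
    then show ?thesis by simp
  qed
qed

lemma two_loci:
  assumes "CARD('n::finite) \<ge> 2"
  obtains i j :: "'n::finite" where "i \<noteq> j"
proof -
  have "\<not> CARD('n) \<le> Suc 0" using assms by simp
  then show ?thesis using that by (auto simp: card_le_Suc0_iff_eq)
qed

lemma two_power_card: "(2::nat) ^ CARD('n::finite) = 2 * 2 ^ (CARD('n) - 1)"
  by (simp flip: power_Suc)

lemma card_toggle_swap:
  fixes P :: "'n::finite set set"
  assumes "\<And>g. toggle k g \<in> P \<longleftrightarrow> g \<notin> P"
  shows "card P = 2 ^ (CARD('n) - 1)"
proof -
  have "toggle k ` P = - P"
    by (simp add: set_eq_iff toggle_image_iff assms)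
  then have "card P + card P = card (P \<union> - P)"
    by (metis card_Un_disjoint card_image finite Compl_disjoint inj_toggle inj_on_subset subset_UNIV)
  then show ?thesis by (simp add: two_power_card)
qed

section \<open>Affine functions on the vertices of the cube\<close>

lemma inner_vert: "a \<bullet> vert x = (\<Sum>k\<in>x. a $ k)"
  by (simp add: inner_vec_def vert_def if_distrib sum.If_cases cong: if_cong)

lemma inj_vert: "inj vert"
  by (auto simp: inj_on_def vec_eq_iff vert_def split: if_splits)

lemma inner_vert_toggle:
  "d \<bullet> vert (toggle k g) = d \<bullet> vert g + (if k \<in> g then - d $ k else d $ k)"
  by (simp add: inner_vert toggle_def sum.remove)

lemma vert_parallelogram:
  "i \<noteq> j \<Longrightarrow> vert g + vert (toggle j (toggle i g)) = vert (toggle i g) + vert (toggle j g)"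
  by (auto simp: vec_eq_iff vert_def toggle_def)

lemma affine_sum_sym_diff:
  fixes c :: "'n::finite \<Rightarrow> real"
  obtains a b where "\<And>x. a \<bullet> vert x + b = (\<Sum>k\<in>sym_diff g x. c k)"
proof -
  define a :: "real^'n" where "a = (\<chi> k. if k \<in> g then - c k else c k)"
  have "a \<bullet> vert x + (\<Sum>k\<in>g. c k) = (\<Sum>k\<in>sym_diff g x. c k)" for x
  proof -
    have "a \<bullet> vert x = (\<Sum>k\<in>x - g. c k) - (\<Sum>k\<in>x \<inter> g. c k)"
      by (simp add: inner_vert a_def sum.Int_Diff[of x _ g] sum_negf)
    moreover have "(\<Sum>k\<in>g. c k) = (\<Sum>k\<in>g - x. c k) + (\<Sum>k\<in>x \<inter> g. c k)"
      by (simp add: sum.Int_Diff[of g _ x] Int_commute)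
    moreover have "(\<Sum>k\<in>sym_diff g x. c k) = (\<Sum>k\<in>g - x. c k) + (\<Sum>k\<in>x - g. c k)"
      by (rule sum.union_disjoint) auto
    ultimately show ?thesis by simp
  qed
  then show ?thesis by (rule that)
qed

lemma affine_majorant_off_subcube:
  fixes w :: "'n::finite set \<Rightarrow> real" and c :: "'n \<Rightarrow> real"
  obtains a b where
    "\<And>x. sym_diff g x \<subseteq> I \<Longrightarrow> a \<bullet> vert x + b = w g + (\<Sum>k\<in>sym_diff g x. c k)"
    "\<And>x. \<not> sym_diff g x \<subseteq> I \<Longrightarrow> w x < a \<bullet> vert x + b"
proof -
  define B where "B = (\<Sum>x\<in>UNIV. \<bar>w x\<bar>)"
  define C where "C = (\<Sum>k\<in>I. \<bar>c k\<bar>)"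
  (* The slope M off I exceeds 2 B + C, which bounds w x - w g minus the contribution of
     the loci in I. *)
  define M where "M = 2 * B + C + 1"
  define c' where "c' k = (if k \<in> I then c k else M)" for k
  obtain a b where ab: "\<And>x. a \<bullet> vert x + b = (\<Sum>k\<in>sym_diff g x. c' k)"
    using affine_sum_sym_diff[where g = g and c = c'] by blast
  have split: "(\<Sum>k\<in>D. c' k) = (\<Sum>k\<in>D \<inter> I. c k) + M * card (D - I)" for D
    by (simp add: c'_def sum.If_cases Diff_eq)
  have "a \<bullet> vert x + (b + w g) = w g + (\<Sum>k\<in>sym_diff g x. c k)" if "sym_diff g x \<subseteq> I" for x
    using ab[of x] split[of "sym_diff g x"] that by (simp add: Int_absorb2)
  moreover have "w x < a \<bullet> vert x + (b + w g)" if "\<not> sym_diff g x \<subseteq> I" for x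
  proof -
    have "B \<ge> 0" "C \<ge> 0" by (simp_all add: B_def C_def sum_nonneg)
    have "card (sym_diff g x - I) \<ge> 1"
      using that by (simp add: Suc_le_eq card_gt_0_iff)
    then have "M \<le> M * card (sym_diff g x - I)"
      using \<open>B \<ge> 0\<close> \<open>C \<ge> 0\<close> by (simp add: M_def)
    moreover have "- C \<le> (\<Sum>k\<in>sym_diff g x \<inter> I. c k)"
    proof -
      have "\<bar>\<Sum>k\<in>sym_diff g x \<inter> I. c k\<bar> \<le> (\<Sum>k\<in>sym_diff g x \<inter> I. \<bar>c k\<bar>)"
        by (rule sum_abs)
      also have "\<dots> \<le> C"
        unfolding C_def by (rule sum_mono2) auto
      finally show ?thesis by linarith
    qed
    moreover have "\<bar>w x\<bar> \<le> B" "\<bar>w g\<bar> \<le> B"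
      unfolding B_def by (rule member_le_sum; simp)+
    ultimately show ?thesis
      using ab[of x] split[of "sym_diff g x"] by (simp add: M_def)
  qed
  ultimately show ?thesis by (rule that)
qed

section \<open>Upper faces and cells\<close>

lemma upper_faceI:
  "(\<And>x. w x \<le> a \<bullet> vert x + b) \<Longrightarrow> upper_face w {x. w x = a \<bullet> vert x + b}"
  unfolding upper_face_def by blast

lemma tilt_majorant_neg:
  fixes w f h :: "'a::finite \<Rightarrow> real"
  assumes le: "\<And>x. w x \<le> f x" and touch: "\<And>x. w x = f x \<Longrightarrow> h x = 0" and "h z < 0"
  obtains s where "\<And>x. w x \<le> f x + s * h x" "{x. w x = f x} \<subset> {x. w x = f x + s * h x}"
proof -
  define N where "N = {x. h x < 0}"
  define r where "r x = (f x - w x) / (- h x)" for x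
  define y where "y = arg_min_on r N"
  have "N \<noteq> {}" using \<open>h z < 0\<close> by (auto simp: N_def)
  then have y: "y \<in> N" "\<And>x. x \<in> N \<Longrightarrow> r y \<le> r x"
    unfolding y_def by (meson arg_min_if_finite finite not_le)+
  have "r y \<ge> 0" using y(1) le[of y] by (simp add: r_def N_def divide_nonneg_neg)
  have "w x \<le> f x + r y * h x" for x
  proof (cases "x \<in> N")
    case True
    then have "r y * (- h x) \<le> r x * (- h x)"
      using y(2) by (intro mult_right_mono) (auto simp: N_def)
    also have "\<dots> = f x - w x" using True by (simp add: r_def N_def)
    finally show ?thesis by (simp add: algebra_simps)
  next
    case False
    then show ?thesis using le[of x] \<open>r y \<ge> 0\<close> by (simp add: N_def add_increasing2)
  qed
  moreover have "{x. w x = f x} \<subset> {x. w x = f x + r y * h x}"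
  proof
    show "{x. w x = f x} \<subseteq> {x. w x = f x + r y * h x}" using touch by auto
    have "h y < 0" using y(1) by (simp add: N_def)
    then show "{x. w x = f x} \<noteq> {x. w x = f x + r y * h x}"
      using touch[of y] by (auto simp: r_def set_eq_iff intro!: exI[of _ y])
  qed
  ultimately show ?thesis by (rule that)
qed

lemma tilt_majorant:
  fixes w f h :: "'a::finite \<Rightarrow> real"
  assumes le: "\<And>x. w x \<le> f x" and touch: "\<And>x. w x = f x \<Longrightarrow> h x = 0" and "h z \<noteq> 0"
  obtains s where "\<And>x. w x \<le> f x + s * h x" "{x. w x = f x} \<subset> {x. w x = f x + s * h x}"
proof (cases "h z < 0")
  case True
  with le touch show ?thesis using that by (rule tilt_majorant_neg)
next
  case False
  then have "- h z < 0" using \<open>h z \<noteq> 0\<close> by simp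
  moreover have "\<And>x. w x = f x \<Longrightarrow> - h x = 0" using touch by simp
  ultimately obtain s where "\<And>x. w x \<le> f x + s * - h x" "{x. w x = f x} \<subset> {x. w x = f x + s * - h x}"
    using le by (rule_tac tilt_majorant_neg[of w f "\<lambda>x. - h x" z]) auto
  then show ?thesis using that[of "- s"] by simp
qed

(* A face that is not full-dimensional lies in a hyperplane; tilting the supporting
   function around it picks up a further vertex. *)
lemma upper_face_extend:
  fixes w :: "'n::finite set \<Rightarrow> real"
  assumes "upper_face w T" and "aff_dim (vert ` T) < CARD('n)"
  obtains T' where "upper_face w T'" "T \<subset> T'"
proof -
  obtain a b where le: "\<And>x. w x \<le> a \<bullet> vert x + b" and T: "T = {x. w x = a \<bullet> vert x + b}"
    using assms(1) unfolding upper_face_def by blast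
  obtain d :: "real^'n" and e where "d \<noteq> 0" and hyp: "vert ` T \<subseteq> {x. d \<bullet> x = e}"
    using aff_lowdim_subset_hyperplane[of "vert ` T"] assms(2) by auto
  define h where "h x = d \<bullet> vert x - e" for x
  obtain k where "d $ k \<noteq> 0" using \<open>d \<noteq> 0\<close> by (metis vec_eq_iff zero_index)
  then have "h (toggle k {}) \<noteq> h {}" by (simp add: h_def inner_vert_toggle)
  then have "h (toggle k {}) \<noteq> 0 \<or> h {} \<noteq> 0" by linarith
  then obtain z where "h z \<noteq> 0" by blast
  moreover have "h x = 0" if "w x = a \<bullet> vert x + b" for x
    using hyp that by (auto simp: h_def T)
  ultimately obtain s where le': "\<And>x. w x \<le> a \<bullet> vert x + b + s * h x"
    and sub: "{x. w x = a \<bullet> vert x + b} \<subset> {x. w x = a \<bullet> vert x + b + s * h x}"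
    using le by (rule_tac tilt_majorant[of w "\<lambda>x. a \<bullet> vert x + b" h z]) auto
  have tilted: "a \<bullet> vert x + b + s * h x = (a + s *\<^sub>R d) \<bullet> vert x + (b - s * e)" for x
    by (simp add: h_def inner_add_left algebra_simps)
  have "upper_face w {x. w x = (a + s *\<^sub>R d) \<bullet> vert x + (b - s * e)}"
    using le' unfolding tilted by (rule upper_faceI)
  moreover have "T \<subset> {x. w x = (a + s *\<^sub>R d) \<bullet> vert x + (b - s * e)}"
    using sub unfolding tilted T .
  ultimately show ?thesis by (rule that)
qed

lemma upper_face_subset_induced_cell:
  fixes w :: "'n::finite set \<Rightarrow> real"
  assumes "upper_face w T"
  obtains S where "S \<in> induced_cells w" "T \<subseteq> S"
proof -
  have "{S. upper_face w S \<and> T \<subseteq> S} \<noteq> {}"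
    using assms by auto
  then obtain S where S: "upper_face w S" "T \<subseteq> S"
    and max: "\<forall>S'. upper_face w S' \<and> T \<subseteq> S' \<longrightarrow> S \<subseteq> S' \<longrightarrow> S = S'"
    using finite_has_maximal[of "{S. upper_face w S \<and> T \<subseteq> S}"] by auto
  have "\<not> aff_dim (vert ` S) < CARD('n)"
  proof
    assume "aff_dim (vert ` S) < CARD('n)"
    with S(1) obtain S' where "upper_face w S'" "S \<subset> S'"
      by (rule upper_face_extend)
    then show False using max S(2) by blast
  qed
  then have "aff_dim (vert ` S) = CARD('n)"
    using aff_dim_le_DIM[of "vert ` S"] by simp
  then have "S \<in> induced_cells w" using S(1) by (simp add: induced_cells_def)
  then show ?thesis using S(2) by (rule that)
qed

section \<open>Peaks of Haldane landscapes and isolated genotypes\<close>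

lemma peak_toggle_less: "peak w g \<Longrightarrow> w (toggle k g) < w g"
  unfolding peak_def using hamming_toggle by blast

lemma haldane_peak_toggle:
  fixes w :: "'n::finite set \<Rightarrow> real"
  assumes "haldane w"
  shows "peak w (toggle k g) \<longleftrightarrow> \<not> peak w g"
proof -
  define P where "P = {g. peak w g}"
  have "toggle k ` P \<subseteq> - P"
  proof
    fix g assume "g \<in> toggle k ` P"
    then have "peak w (toggle k g)" by (simp add: toggle_image_iff P_def)
    then have "\<not> peak w g"
      using peak_toggle_less[of w "toggle k g" k] peak_toggle_less[of w g k] by auto
    then show "g \<in> - P" by (simp add: P_def)
  qed
  moreover have "card (- P) = 2 ^ CARD('n) - card P"
    by (simp add: Compl_eq_Diff_UNIV card_Diff_subset)
  then have "card (toggle k ` P) = card (- P)"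
    using assms by (simp add: card_image inj_on_subset[OF inj_toggle] haldane_def P_def two_power_card)
  ultimately have "toggle k ` P = - P"
    by (simp add: card_subset_eq)
  then show ?thesis
    by (simp add: set_eq_iff toggle_image_iff P_def)
qed

lemma card_non_peaks:
  fixes w :: "'n::finite set \<Rightarrow> real"
  assumes "haldane w"
  shows "card {g. \<not> peak w g} = 2 ^ (CARD('n) - 1)"
  by (rule card_toggle_swap) (simp add: haldane_peak_toggle[OF assms])

lemma non_peak_isolated:
  fixes w :: "'n::finite set \<Rightarrow> real"
  assumes "haldane w" and "\<not> peak w v"
  shows "isolated (induced_cells w) v"
  unfolding isolated_def
proof
  assume "\<exists>g' S. hamming v g' = 2 \<and> S \<in> induced_cells w \<and> v \<in> S \<and> g' \<in> S"
  then obtain g' S where "hamming v g' = 2" "S \<in> induced_cells w" "v \<in> S" "g' \<in> S"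
    by blast
  moreover from \<open>hamming v g' = 2\<close> obtain i j where ij: "i \<noteq> j" "g' = toggle j (toggle i v)"
    unfolding hamming_eq_2_iff by blast
  ultimately have S: "upper_face w S" "v \<in> S" "toggle j (toggle i v) \<in> S"
    by (auto simp: induced_cells_def)
  then obtain a b where le: "\<And>x. w x \<le> a \<bullet> vert x + b" and S_eq: "S = {x. w x = a \<bullet> vert x + b}"
    unfolding upper_face_def by blast
  have "peak w (toggle i v)" "peak w (toggle j v)"
    using assms by (simp_all add: haldane_peak_toggle)
  then have "w v < w (toggle i v)" "w (toggle j (toggle i v)) < w (toggle j v)"
    using peak_toggle_less[of w "toggle i v" i] peak_toggle_less[of w "toggle j v" i]
    by (simp_all only: toggle_toggle toggle_commute[of i j v])
  moreover have "a \<bullet> vert v + a \<bullet> vert (toggle j (toggle i v))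
      = a \<bullet> vert (toggle i v) + a \<bullet> vert (toggle j v)"
    using arg_cong[OF vert_parallelogram[OF ij(1), of v], of "inner a"] by (simp add: inner_add_right)
  moreover have "w v = a \<bullet> vert v + b" "w (toggle j (toggle i v)) = a \<bullet> vert (toggle j (toggle i v)) + b"
    using S(2,3) unfolding S_eq by auto
  ultimately show False
    using le[of "toggle i v"] le[of "toggle j v"] by linarith
qed

lemma peak_diagonal_upper_face:
  fixes w :: "'n::finite set \<Rightarrow> real" and i j :: 'n
  assumes "haldane w" and "peak w g" and "i \<noteq> j"
  obtains S where "upper_face w S" "g \<in> S" "toggle j (toggle i g) \<in> S"
proof -
  define g\<^sub>i where "g\<^sub>i = toggle i g"
  define g\<^sub>j where "g\<^sub>j = toggle j g"
  define g' where "g' = toggle j g\<^sub>i"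
  have "peak w g'"
    using assms(1,2) by (simp add: g'_def g\<^sub>i_def haldane_peak_toggle)
  then have less: "w g\<^sub>i < w g" "w g\<^sub>j < w g'"
    using peak_toggle_less[of w g i] peak_toggle_less[of w g' i] assms(2)
    by (simp_all only: g\<^sub>i_def g\<^sub>j_def g'_def toggle_commute[of i j "toggle i g"] toggle_toggle)
  (* Interpolate w along g, g\<^sub>i, g'; at g\<^sub>j this gives w g + w g' - w g\<^sub>i > w g\<^sub>j. *)
  define c where "c k = (if k = i then w g\<^sub>i - w g else w g' - w g\<^sub>i)" for k
  obtain a b where
    on: "\<And>x. sym_diff g x \<subseteq> {i, j} \<Longrightarrow> a \<bullet> vert x + b = w g + (\<Sum>k\<in>sym_diff g x. c k)"
    and off: "\<And>x. \<not> sym_diff g x \<subseteq> {i, j} \<Longrightarrow> w x < a \<bullet> vert x + b"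
    using affine_majorant_off_subcube[where w = w and g = g and I = "{i, j}" and c = c] by blast
  have at_g: "w g = a \<bullet> vert g + b" and at_g': "w g' = a \<bullet> vert g' + b"
    using on[of g] on[of g'] assms(3)
    by (simp_all add: g'_def g\<^sub>i_def sym_diff_toggle2 c_def)
  have "w x \<le> a \<bullet> vert x + b" for x
  proof (cases "sym_diff g x \<subseteq> {i, j}")
    case True
    then consider "x = g" | "x = g\<^sub>i" | "x = g\<^sub>j" | "x = g'"
      using sym_diff_subset_pair[OF _ assms(3)] unfolding g\<^sub>i_def g\<^sub>j_def g'_def by blast
    then show ?thesis
    proof cases
      case 2
      then show ?thesis using on[of x] by (simp add: g\<^sub>i_def c_def)
    next
      case 3
      then show ?thesis using on[of x] less assms(3) by (simp add: g\<^sub>j_def c_def)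
    qed (use at_g at_g' in simp_all)
  next
    case False
    then show ?thesis using off[of x] by simp
  qed
  then have "upper_face w {x. w x = a \<bullet> vert x + b}"
    by (rule upper_faceI)
  moreover have "g \<in> {x. w x = a \<bullet> vert x + b}" "toggle j (toggle i g) \<in> {x. w x = a \<bullet> vert x + b}"
    using at_g at_g' by (simp_all add: g'_def g\<^sub>i_def)
  ultimately show ?thesis by (rule that)
qed

lemma peak_not_isolated:
  fixes w :: "'n::finite set \<Rightarrow> real" and i j :: 'n
  assumes "haldane w" and "peak w g" and "i \<noteq> j"
  shows "\<not> isolated (induced_cells w) g"
proof -
  obtain F where "upper_face w F" "g \<in> F" "toggle j (toggle i g) \<in> F"
    using assms by (rule peak_diagonal_upper_face)
  moreover obtain S where "S \<in> induced_cells w" "F \<subseteq> S"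
    using \<open>upper_face w F\<close> by (rule upper_face_subset_induced_cell)
  moreover have "hamming g (toggle j (toggle i g)) = 2"
    using assms(3) by (rule hamming_toggle2)
  ultimately show ?thesis unfolding isolated_def by blast
qed

lemma isolated_iff_not_peak:
  fixes w :: "'n::finite set \<Rightarrow> real"
  assumes "CARD('n) \<ge> 2" and "haldane w"
  shows "isolated (induced_cells w) g \<longleftrightarrow> \<not> peak w g"
proof -
  obtain i j :: 'n where "i \<noteq> j" using assms(1) by (rule two_loci)
  then show ?thesis
    using non_peak_isolated[OF assms(2)] peak_not_isolated[OF assms(2)] by blast
qed

lemma card_isolated_haldane:
  fixes w :: "'n::finite set \<Rightarrow> real"
  assumes "CARD('n) \<ge> 2" and "haldane w"
  shows "card {g. isolated (induced_cells w) g} = 2 ^ (CARD('n) - 1)"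
  using card_non_peaks[OF assms(2)] by (simp add: isolated_iff_not_peak[OF assms])

section \<open>Staircase triangulations\<close>

lemma hamming_take:
  assumes "distinct xs" and "k \<le> m" and "m \<le> length xs"
  shows "hamming (set (take k xs)) (set (take m xs)) = m - k"
proof -
  define ys where "ys = drop k (take m xs)"
  have split: "take m xs = take k xs @ ys"
    using assms(2) by (metis ys_def append_take_drop_id min.absorb1 take_take)
  moreover have "distinct (take m xs)" using assms(1) by simp
  ultimately have "set (take k xs) \<inter> set ys = {}" by (metis distinct_append)
  then have "sym_diff (set (take k xs)) (set (take m xs)) = set ys"
    by (auto simp: split)
  moreover have "card (set ys) = m - k"
    using \<open>distinct (take m xs)\<close> assms(3) by (simp add: ys_def distinct_card)
  ultimately show ?thesis by (simp add: hamming_def)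
qed

lemma hamming_cube_sym:
  assumes "bij p"
  shows "hamming (cube_sym p F a) (cube_sym p F b) = hamming a b"
proof -
  have "inj p" using assms by (rule bij_is_inj)
  have "sym_diff (cube_sym p F a) (cube_sym p F b) = p ` sym_diff (sym_diff a F) (sym_diff b F)"
    unfolding cube_sym_def using \<open>inj p\<close> by (simp add: image_Un image_set_diff)
  also have "sym_diff (sym_diff a F) (sym_diff b F) = sym_diff a b"
    by auto
  finally show ?thesis
    using \<open>inj p\<close> by (simp add: hamming_def card_image inj_on_subset)
qed

lemma staircase_walk:
  fixes T :: "'n::finite set set set"
  assumes "staircase T"
  obtains S v where "S \<in> T" and "\<And>k. k \<le> CARD('n) \<Longrightarrow> v k \<in> S"
    and "\<And>k m. k \<le> m \<Longrightarrow> m \<le> CARD('n) \<Longrightarrow> hamming (v k) (v m) = m - k"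
proof -
  obtain p F where "bij p" and T: "T = (\<lambda>S. cube_sym p F ` S) ` standard_staircase"
    using assms unfolding staircase_def by blast
  obtain xs :: "'n list" where xs: "distinct xs" "set xs = UNIV"
    using finite_distinct_list[of "UNIV :: 'n set"] by auto
  then have len: "length xs = CARD('n)" by (metis distinct_card)
  define C where "C = {set (take k xs) | k. k \<le> length xs}"
  define v where "v k = cube_sym p F (set (take k xs))" for k
  have "C \<in> standard_staircase"
    unfolding standard_staircase_def C_def using xs by auto
  then have "cube_sym p F ` C \<in> T" unfolding T by (rule imageI)
  moreover have "v k \<in> cube_sym p F ` C" if "k \<le> CARD('n)" for k
    unfolding v_def C_def using that len by (intro imageI) auto
  moreover have "hamming (v k) (v m) = m - k" if "k \<le> m" "m \<le> CARD('n)" for k m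
    using hamming_take[OF xs(1) that(1)] that(2) len
    by (simp add: v_def hamming_cube_sym[OF \<open>bij p\<close>])
  ultimately show ?thesis by (rule that)
qed

lemma haldane_not_staircase:
  fixes w :: "'n::finite set \<Rightarrow> real"
  assumes "CARD('n) \<ge> 3" and "haldane w"
  shows "\<not> staircase (induced_cells w)"
proof
  assume "staircase (induced_cells w)"
  then obtain S v where S: "S \<in> induced_cells w" and v: "\<And>k. k \<le> CARD('n) \<Longrightarrow> v k \<in> S"
    and dist: "\<And>k m. k \<le> m \<Longrightarrow> m \<le> CARD('n) \<Longrightarrow> hamming (v k) (v m) = m - k"
    using staircase_walk by blast
  have "hamming (v 0) (v 1) = 1"
    using dist[of 0 1] assms(1) by simp
  then obtain k where "v 1 = toggle k (v 0)"
    unfolding hamming_eq_1_iff ..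
  then have "\<not> peak w (v 0) \<or> \<not> peak w (v 1)"
    using haldane_peak_toggle[OF assms(2)] by simp
  then obtain l where "l \<le> 1" and "\<not> peak w (v l)"
    by (metis le_numeral_extra(4) zero_le_one)
  from assms(2) this(2) have "isolated (induced_cells w) (v l)"
    by (rule non_peak_isolated)
  moreover have "hamming (v l) (v (l + 2)) = 2"
    using dist[of l "l + 2"] \<open>l \<le> 1\<close> assms(1) by simp
  moreover have "v l \<in> S" "v (l + 2) \<in> S"
    using v \<open>l \<le> 1\<close> assms(1) by simp_all
  ultimately show False
    using S unfolding isolated_def by blast
qed

definition corner :: "'n::finite set \<Rightarrow> 'n set set" where
  "corner v = insert v {h. hamming v h = 1}"

lemma corner_simplex_iff: "corner_simplex S \<longleftrightarrow> S \<in> range corner"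
  by (auto simp: corner_simplex_def corner_def)

lemma toggle_in_corner: "toggle k v \<in> corner v"
  by (simp add: corner_def hamming_toggle)

lemma aff_dim_corner: "aff_dim (vert ` corner (v :: 'n::finite set)) = CARD('n)"
proof (rule ccontr)
  assume "aff_dim (vert ` corner v) \<noteq> CARD('n)"
  then have "aff_dim (vert ` corner v) < DIM(real^'n)"
    using aff_dim_le_DIM[of "vert ` corner v"] by simp
  then obtain d :: "real^'n" and e where "d \<noteq> 0" and hyp: "vert ` corner v \<subseteq> {x. d \<bullet> x = e}"
    by (rule aff_lowdim_subset_hyperplane)
  have on_hyp: "d \<bullet> vert (toggle k v) = d \<bullet> vert v" for k
    using hyp toggle_in_corner[of k v] by (auto simp: corner_def)
  have "d $ k = 0" for k
    using on_hyp[of k] by (simp add: inner_vert_toggle split: if_splits)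
  then show False using \<open>d \<noteq> 0\<close> by (simp add: vec_eq_iff)
qed

lemma upper_face_corner:
  fixes w :: "'n::finite set \<Rightarrow> real"
  assumes below: "\<And>x. hamming v x \<ge> 2 \<Longrightarrow> w x < w v + (\<Sum>k\<in>sym_diff v x. w (toggle k v) - w v)"
  shows "upper_face w (corner v)"
proof -
  obtain a b where ab: "\<And>x. a \<bullet> vert x + b = (\<Sum>k\<in>sym_diff v x. w (toggle k v) - w v)"
    using affine_sum_sym_diff[where g = v and c = "\<lambda>k. w (toggle k v) - w v"] by blast
  have "w x \<le> a \<bullet> vert x + (b + w v) \<and> (w x = a \<bullet> vert x + (b + w v) \<longleftrightarrow> x \<in> corner v)" for x
  proof (cases "hamming v x \<le> 1")
    case True
    then consider "hamming v x = 0" | "hamming v x = 1" by linarith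
    then show ?thesis
    proof cases
      case 1
      then have "x = v" by (auto simp: hamming_def)
      then show ?thesis using ab[of v] by (simp add: corner_def)
    next
      case 2
      then obtain k where "x = toggle k v" unfolding hamming_eq_1_iff ..
      then show ?thesis using ab[of x] 2 by (simp add: corner_def)
    qed
  next
    case False
    then have "x \<notin> corner v" by (auto simp: corner_def hamming_def)
    then show ?thesis using below[of x] ab[of x] False by simp
  qed
  then have "corner v = {x. w x = a \<bullet> vert x + (b + w v)}"
    and "\<And>x. w x \<le> a \<bullet> vert x + (b + w v)"
    by auto
  then show ?thesis by (simp add: upper_faceI)
qed

lemma corner_cell_not_peak:
  fixes w :: "'n::finite set \<Rightarrow> real"
  assumes "CARD('n) \<ge> 2" and "haldane w" and "corner v \<in> induced_cells w"
  shows "\<not> peak w v"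
proof
  assume "peak w v"
  obtain i j :: 'n where "i \<noteq> j" using assms(1) by (rule two_loci)
  have "\<not> peak w (toggle i v)" using assms(2) \<open>peak w v\<close> by (simp add: haldane_peak_toggle)
  with assms(2) have "isolated (induced_cells w) (toggle i v)" by (rule non_peak_isolated)
  moreover have "hamming (toggle i v) (toggle j v) = 2"
    using hamming_toggle2[OF \<open>i \<noteq> j\<close>, of "toggle i v"] by simp
  ultimately show False
    using assms(3) toggle_in_corner unfolding isolated_def by blast
qed

lemma corner_cut_if_non_peak_corners:
  fixes w :: "'n::finite set \<Rightarrow> real"
  assumes "CARD('n) \<ge> 2" and "haldane w"
    and cells: "\<And>v. \<not> peak w v \<Longrightarrow> corner v \<in> induced_cells w"
  shows "corner_cut (induced_cells w)"
proof -
  have "{S \<in> induced_cells w. corner_simplex S} = corner ` {v. \<not> peak w v}"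
    using cells corner_cell_not_peak[OF assms(1,2)] by (auto simp: corner_simplex_iff)
  moreover have "inj_on corner {v. \<not> peak w v}"
  proof (rule inj_onI)
    fix v v' assume "v \<in> {v. \<not> peak w v}" "v' \<in> {v. \<not> peak w v}" "corner v = corner v'"
    moreover have "v \<in> corner v'"
      using \<open>corner v = corner v'\<close> by (metis corner_def insertI1)
    then have "v = v' \<or> hamming v' v = 1"
      by (simp add: corner_def)
    then have "v = v' \<or> (\<exists>k. v = toggle k v')"
      unfolding hamming_eq_1_iff .
    ultimately show "v = v'"
      using haldane_peak_toggle[OF assms(2)] by auto
  qed
  ultimately show ?thesis
    unfolding corner_cut_def using card_non_peaks[OF assms(2)] by (simp add: card_image)
qed

section \<open>Generic perturbations\<close>

definition affine_relation :: "'n::finite set set \<Rightarrow> ('n set \<Rightarrow> real) \<Rightarrow> bool" where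
  "affine_relation S \<mu> \<longleftrightarrow> (\<exists>x. \<mu> x \<noteq> 0) \<and> (\<forall>x. x \<notin> S \<longrightarrow> \<mu> x = 0) \<and> sum \<mu> UNIV = 0
     \<and> (\<Sum>x\<in>UNIV. \<mu> x *\<^sub>R vert x) = 0"

lemma affine_relation_if_dependent:
  assumes "affine_dependent (vert ` S)"
  shows "\<exists>\<mu>. affine_relation S \<mu>"
proof -
  have "inj_on vert S" by (rule inj_on_subset[OF inj_vert subset_UNIV])
  obtain U where U: "sum U (vert ` S) = 0" "\<exists>v\<in>vert ` S. U v \<noteq> 0"
    "(\<Sum>v\<in>vert ` S. U v *\<^sub>R v) = 0"
    using assms affine_dependent_explicit_finite[of "vert ` S"] by auto
  define \<mu> where "\<mu> x = (if x \<in> S then U (vert x) else 0)" for x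
  have "(\<Sum>x\<in>UNIV. \<mu> x *\<^sub>R vert x) = (\<Sum>x\<in>UNIV. if x \<in> S then U (vert x) *\<^sub>R vert x else 0)"
    by (rule sum.cong) (simp_all add: \<mu>_def)
  also have "\<dots> = (\<Sum>v\<in>vert ` S. U v *\<^sub>R v)"
    using \<open>inj_on vert S\<close> by (simp add: sum.If_cases sum.reindex)
  moreover have "sum \<mu> UNIV = sum U (vert ` S)"
    using \<open>inj_on vert S\<close> by (simp add: \<mu>_def sum.If_cases sum.reindex)
  moreover have "\<exists>x. \<mu> x \<noteq> 0" using U(2) by (auto simp: \<mu>_def)
  ultimately have "affine_relation S \<mu>"
    using U by (simp add: affine_relation_def \<mu>_def)
  then show ?thesis by blast
qed

lemma upper_face_affine_relation:
  assumes "upper_face w S" and "affine_relation S \<mu>"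
  shows "(\<Sum>x\<in>UNIV. \<mu> x * w x) = 0"
proof -
  obtain a b where S: "S = {x. w x = a \<bullet> vert x + b}"
    using assms(1) unfolding upper_face_def by blast
  have "\<mu> x * w x = a \<bullet> (\<mu> x *\<^sub>R vert x) + b * \<mu> x" for x
    using assms(2) by (cases "x \<in> S") (auto simp: S affine_relation_def algebra_simps)
  then have "(\<Sum>x\<in>UNIV. \<mu> x * w x) = a \<bullet> (\<Sum>x\<in>UNIV. \<mu> x *\<^sub>R vert x) + b * sum \<mu> UNIV"
    by (simp add: sum.distrib inner_sum_right sum_distrib_left)
  also have "\<dots> = 0"
    using assms(2) by (simp add: affine_relation_def)
  finally show ?thesis .
qed

(* One affine dependence is fixed for each affinely dependent vertex set, which keeps the
   family finite; the point-mass differences take care of injectivity. *)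
definition test_relations :: "('n::finite set \<Rightarrow> real) set" where
  "test_relations =
     {\<lambda>z. of_bool (z = x) - of_bool (z = y) | x y. x \<noteq> y}
     \<union> {SOME \<mu>. affine_relation S \<mu> | S. \<exists>\<mu>. affine_relation S \<mu>}"

lemma finite_test_relations: "finite (test_relations :: ('n::finite set \<Rightarrow> real) set)"
proof -
  have "{\<lambda>z :: 'n set. of_bool (z = x) - of_bool (z = y) | x y. x \<noteq> y}
      \<subseteq> (\<lambda>(x, y) z. of_bool (z = x) - of_bool (z = y)) ` UNIV"
    by auto
  then have "finite {\<lambda>z :: 'n set. of_bool (z = x) - of_bool (z = y) | x y. x \<noteq> y}"
    by (rule finite_subset) (intro finite_imageI finite)
  then show ?thesis
    unfolding test_relations_def by simp
qed

lemma test_relations_nonzero: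
  assumes "\<nu> \<in> test_relations"
  shows "\<exists>x. \<nu> x \<noteq> 0"
proof -
  consider (point_pair) x y where "x \<noteq> y" "\<nu> = (\<lambda>z. of_bool (z = x) - of_bool (z = y))"
    | (dependence) S where "\<exists>\<mu>. affine_relation S \<mu>" "\<nu> = (SOME \<mu>. affine_relation S \<mu>)"
    using assms unfolding test_relations_def by blast
  then show ?thesis
  proof cases
    case point_pair
    then have "\<nu> x = 1" by simp
    then show ?thesis by (intro exI[of _ x]) simp
  next
    case dependence
    then have "affine_relation S \<nu>" by (simp add: someI_ex)
    then show ?thesis by (simp add: affine_relation_def)
  qed
qed

lemma generic_if_test_relations_nonvanishing:
  fixes w :: "'n::finite set \<Rightarrow> real"
  assumes nonvanishing: "\<And>\<nu>. \<nu> \<in> test_relations \<Longrightarrow> (\<Sum>x\<in>UNIV. \<nu> x * w x) \<noteq> 0"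
  shows "generic w"
  unfolding generic_def
proof (intro conjI injI ballI notI)
  fix x y assume "w x = w y"
  show "x = y"
  proof (rule ccontr)
    assume "x \<noteq> y"
    then have "(\<lambda>z. of_bool (z = x) - of_bool (z = y)) \<in> test_relations"
      by (auto simp: test_relations_def)
    moreover have "(\<Sum>z\<in>UNIV. (of_bool (z = x) - of_bool (z = y)) * w z) = w x - w y"
      by (simp add: left_diff_distrib sum_subtractf)
    ultimately show False using nonvanishing \<open>w x = w y\<close> by fastforce
  qed
next
  fix S assume "S \<in> induced_cells w" and "affine_dependent (vert ` S)"
  then have ex: "\<exists>\<mu>. affine_relation S \<mu>" by (simp add: affine_relation_if_dependent)
  define \<mu> where "\<mu> = (SOME \<mu>. affine_relation S \<mu>)"
  have "\<mu> \<in> test_relations"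
    using ex by (auto simp: test_relations_def \<mu>_def)
  moreover have "affine_relation S \<mu>"
    unfolding \<mu>_def using ex by (rule someI_ex)
  with \<open>S \<in> induced_cells w\<close> have "(\<Sum>x\<in>UNIV. \<mu> x * w x) = 0"
    by (auto simp: induced_cells_def intro: upper_face_affine_relation)
  ultimately show False using nonvanishing by blast
qed

(* The exponents Suc (idx x) are distinct, so the coefficient of t ^ Suc (idx x\<^sub>0) is
   \<nu> x\<^sub>0. *)
lemma finite_roots_moment_perturbation:
  fixes \<nu> w\<^sub>0 :: "'a::finite \<Rightarrow> real" and idx :: "'a \<Rightarrow> nat"
  assumes "inj idx" and "\<nu> x\<^sub>0 \<noteq> 0"
  shows "finite {t. (\<Sum>x\<in>UNIV. \<nu> x * (w\<^sub>0 x + t ^ Suc (idx x))) = 0}"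
proof -
  define q where "q = [:\<Sum>x\<in>UNIV. \<nu> x * w\<^sub>0 x:] + (\<Sum>x\<in>UNIV. monom (\<nu> x) (Suc (idx x)))"
  have "poly q t = (\<Sum>x\<in>UNIV. \<nu> x * (w\<^sub>0 x + t ^ Suc (idx x)))" for t
    by (simp add: q_def poly_sum poly_monom distrib_left sum.distrib)
  moreover have "coeff q (Suc (idx x\<^sub>0)) = \<nu> x\<^sub>0"
    using \<open>inj idx\<close> by (simp add: q_def coeff_sum coeff_monom inj_eq)
  then have "q \<noteq> 0" using assms(2) by auto
  ultimately show ?thesis
    using poly_roots_finite[of q] by simp
qed

lemma finite_non_generic_perturbations:
  fixes w\<^sub>0 :: "'n::finite set \<Rightarrow> real" and idx :: "'n set \<Rightarrow> nat"
  assumes "inj idx"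
  shows "finite (\<Union>\<nu>\<in>test_relations. {t. (\<Sum>x\<in>UNIV. \<nu> x * (w\<^sub>0 x + t ^ Suc (idx x))) = 0})"
proof (rule finite_UN_I[OF finite_test_relations])
  fix \<nu> :: "'n set \<Rightarrow> real" assume "\<nu> \<in> test_relations"
  then obtain x\<^sub>0 where "\<nu> x\<^sub>0 \<noteq> 0" by (blast dest: test_relations_nonzero)
  with assms show "finite {t. (\<Sum>x\<in>UNIV. \<nu> x * (w\<^sub>0 x + t ^ Suc (idx x))) = 0}"
    by (rule finite_roots_moment_perturbation)
qed

lemma exists_generic_perturbation:
  fixes w\<^sub>0 :: "'n::finite set \<Rightarrow> real"
  assumes "0 < \<epsilon>"
  obtains p where "\<And>g. 0 < p g \<and> p g < \<epsilon>" and "generic (\<lambda>g. w\<^sub>0 g + p g)"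
proof -
  obtain idx :: "'n set \<Rightarrow> nat" where "inj idx"
    using finite_imp_inj_to_nat_seg[of "UNIV :: 'n set set"] by auto
  define bad where "bad = (\<Union>\<nu>\<in>test_relations. {t. (\<Sum>x\<in>UNIV. \<nu> x * (w\<^sub>0 x + t ^ Suc (idx x))) = 0})"
  have "finite bad"
    unfolding bad_def using \<open>inj idx\<close> by (rule finite_non_generic_perturbations)
  moreover have "infinite {0<..<min \<epsilon> 1}"
    using assms by (simp add: infinite_Ioo)
  ultimately have "infinite ({0<..<min \<epsilon> 1} - bad)"
    by (rule Diff_infinite_finite)
  then have "{0<..<min \<epsilon> 1} - bad \<noteq> {}"
    by (metis finite.emptyI)
  then obtain t where "t \<in> {0<..<min \<epsilon> 1}" and "t \<notin> bad"
    by blast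
  then have t: "0 < t" "t < \<epsilon>" "t < 1" "t \<notin> bad"
    by auto
  define p where "p g = t ^ Suc (idx g)" for g
  have "0 < p g \<and> p g < \<epsilon>" for g
  proof -
    have "p g \<le> t ^ 1"
      unfolding p_def using t by (intro power_decreasing) auto
    moreover have "0 < p g" using t by (simp add: p_def)
    ultimately show ?thesis using t by simp
  qed
  moreover have "generic (\<lambda>g. w\<^sub>0 g + p g)"
    using t(4) unfolding bad_def p_def by (intro generic_if_test_relations_nonvanishing) blast
  ultimately show ?thesis by (rule that)
qed

definition parity_landscape :: "('n::finite set \<Rightarrow> real) \<Rightarrow> 'n set \<Rightarrow> real" where
  "parity_landscape p g = (if even (card g) then 1 else 0) + p g"

context
  fixes p :: "'n::finite set \<Rightarrow> real"
  assumes small: "\<And>g. 0 \<le> p g \<and> p g < 1/10"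
begin

lemma parity_landscape_bounds:
  "0 \<le> parity_landscape p g" "parity_landscape p g < 11/10"
  "even (card g) \<Longrightarrow> 1 \<le> parity_landscape p g"
  "odd (card g) \<Longrightarrow> parity_landscape p g < 1/10"
  using small[of g] by (simp_all add: parity_landscape_def)

lemma fitness_landscape_parity: "fitness_landscape (parity_landscape p)"
  unfolding fitness_landscape_def by (simp add: parity_landscape_bounds)

lemma peak_parity_landscape_iff: "peak (parity_landscape p) g \<longleftrightarrow> even (card g)"
proof
  assume "peak (parity_landscape p) g"
  obtain k :: 'n where True by simp
  have "parity_landscape p (toggle k g) < parity_landscape p g"
    using \<open>peak _ g\<close> by (rule peak_toggle_less)
  moreover have "odd (card g) \<Longrightarrow> parity_landscape p g < parity_landscape p (toggle k g)"
    using parity_landscape_bounds(4)[of g] parity_landscape_bounds(3)[of "toggle k g"]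
    by (simp add: even_card_toggle)
  ultimately show "even (card g)" by linarith
next
  assume "even (card g)"
  show "peak (parity_landscape p) g"
    unfolding peak_def hamming_eq_1_iff
  proof (intro allI impI, elim exE)
    fix h k assume "h = toggle k g"
    then have "odd (card h)" using \<open>even (card g)\<close> by (simp add: even_card_toggle)
    then show "parity_landscape p h < parity_landscape p g"
      using parity_landscape_bounds(3,4) \<open>even (card g)\<close> by force
  qed
qed

lemma haldane_parity_landscape: "haldane (parity_landscape p)"
  unfolding haldane_def peak_parity_landscape_iff
  by (rule card_toggle_swap) (simp add: even_card_toggle)

lemma corner_cell_parity_landscape:
  assumes "odd (card v)"
  shows "corner v \<in> induced_cells (parity_landscape p)"
proof -
  let ?w = "parity_landscape p"
  have "upper_face ?w (corner v)"
  proof (rule upper_face_corner)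
    fix x assume "hamming v x \<ge> 2"
    have "?w (toggle k v) - ?w v \<ge> 9/10" for k
      using parity_landscape_bounds(3)[of "toggle k v"] parity_landscape_bounds(4)[of v] assms
      by (simp add: even_card_toggle)
    then have "real (card (sym_diff v x)) * (9/10) \<le> (\<Sum>k\<in>sym_diff v x. ?w (toggle k v) - ?w v)"
      by (intro sum_bounded_below) simp
    moreover have "real (card (sym_diff v x)) \<ge> 2"
      using \<open>hamming v x \<ge> 2\<close> by (simp add: hamming_def)
    moreover have "?w x < 11/10" "0 \<le> ?w v"
      by (rule parity_landscape_bounds)+
    ultimately show "?w x < ?w v + (\<Sum>k\<in>sym_diff v x. ?w (toggle k v) - ?w v)"
      by linarith
  qed
  then show ?thesis by (simp add: induced_cells_def aff_dim_corner)
qed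

end

lemma exists_generic_haldane_corner_cut:
  assumes "CARD('n::finite) \<ge> 2"
  shows "\<exists>w :: 'n set \<Rightarrow> real. fitness_landscape w \<and> generic w \<and> haldane w
           \<and> corner_cut (induced_cells w)"
proof -
  obtain p :: "'n set \<Rightarrow> real" where small: "\<And>g. 0 < p g \<and> p g < 1/10"
    and gen: "generic (\<lambda>g. (if even (card g) then 1 else 0) + p g)"
    using exists_generic_perturbation[of "1/10" "\<lambda>g. if even (card g) then 1 else 0"] by auto
  have small': "0 \<le> p g \<and> p g < 1/10" for g using small[of g] by simp
  have "fitness_landscape (parity_landscape p)"
    using small' by (rule fitness_landscape_parity)
  moreover have "haldane (parity_landscape p)"
    using small' by (rule haldane_parity_landscape)
  moreover from assms this have "corner_cut (induced_cells (parity_landscape p))"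
    by (rule corner_cut_if_non_peak_corners)
      (simp add: peak_parity_landscape_iff[OF small'] corner_cell_parity_landscape[OF small'])
  moreover have "generic (parity_landscape p)"
    using gen by (simp add: parity_landscape_def[abs_def])
  ultimately show ?thesis by blast
qed

theorem mainTheorem8:
  assumes "CARD('n::finite) \<ge> 2"
  shows "(\<forall>w :: 'n set \<Rightarrow> real. fitness_landscape w \<and> generic w \<and> haldane w \<longrightarrow>
            card {g. isolated (induced_cells w) g} = 2 ^ (CARD('n) - 1))
       \<and> (CARD('n) \<ge> 3 \<longrightarrow>
            \<not> (\<exists>w :: 'n set \<Rightarrow> real. fitness_landscape w \<and> generic w \<and> haldane w
                 \<and> staircase (induced_cells w)))
       \<and> (\<exists>w :: 'n set \<Rightarrow> real. fitness_landscape w \<and> generic w \<and> haldane w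
                 \<and> corner_cut (induced_cells w))"
proof (intro conjI allI impI)
  fix w :: "'n set \<Rightarrow> real"
  assume "fitness_landscape w \<and> generic w \<and> haldane w"
  with assms show "card {g. isolated (induced_cells w) g} = 2 ^ (CARD('n) - 1)"
    by (simp add: card_isolated_haldane)
next
  assume "CARD('n) \<ge> 3"
  then show "\<not> (\<exists>w :: 'n set \<Rightarrow> real. fitness_landscape w \<and> generic w \<and> haldane w
                 \<and> staircase (induced_cells w))"
    using haldane_not_staircase by blast
next
  show "\<exists>w :: 'n set \<Rightarrow> real. fitness_landscape w \<and> generic w \<and> haldane w
           \<and> corner_cut (induced_cells w)"
    using assms by (rule exists_generic_haldane_corner_cut)
qed

end
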